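(* Let $f$ be convex, differentiable, symmetric, $M$-smooth and $(m,r)$-restricted strongly convex, $\kappa=M/m$. Let $X^\star$ be a minimizer of $f$ over $\mathbb{S}^n_+$ with $r\le\mathrm{rank}(X^\star)$, $X^\star_r=U^\star_r(U^\star_r)^\top$ its best rank-$r$ approximation ($U^\star_r\in\mathbb{R}^{n\times r}$), and assume (A3): $\|X^\star-X^\star_r\|_F\le\frac{1}{200\kappa^{1.5}}\frac{\sigma_r(X^\star)}{\sigma_1(X^\star)}\sigma_r(X^\star)$. Let $U\in\mathbb{R}^{n\times r}$ with $\mathrm{Dist}(U,U^\star_r)\le\rho'\sigma_r(U^\star_r)$, $\rho'=\frac{1}{100\kappa}\frac{\sigma_r(X^\star)}{\sigma_1(X^\star)}$; let $X=UU^\top$, $\Delta=U-U^\star_rR_U^\star$ and $\hat\eta=\frac{1}{16(M\|X\|_2+\|\nabla f(X)Q_UQ_U^\top\|_2)}$. Then $$\langle\nabla f(X),\Delta\Delta^\top\rangle\ge-\tfrac{2\hat\eta}{25}\|\nabla f(X)U\|_F^2-\Big(\tfrac{m\,\sigma_r(X^\star)}{20}+M\|X^\star-X^\star_r\|_F\Big)\mathrm{Dist}(U,U^\star_r)^2.$$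
   Context: $\mathbb{S}^n_+$ is the cone of $n\times n$ PSD matrices. For a matrix $A$, $\sigma_i(A)$ is its $i$-th largest singular value, $\|A\|_2=\sigma_1(A)$, $\|A\|_F$ the Frobenius norm, $\langle A,B\rangle=\mathrm{tr}(A^\top B)$. $Q_U$ is a matrix whose columns form an orthonormal basis of the column space of $U$. For $U,V\in\mathbb{R}^{n\times r}$, $\mathrm{Dist}(U,V)=\min_{R\in\mathcal{O}_r}\|U-VR\|_F$, $\mathcal{O}_r$ the $r\times r$ orthogonal matrices; $R_U^\star$ is a minimizer in $\mathrm{Dist}(U,U^\star_r)$. $f$ symmetric: $f(X)=f(X^\top)$. $M$-smooth: $\|\nabla f(X)-\nabla f(Y)\|_F\le M\|X-Y\|_F$ for $X,Y\in\mathbb{S}^n_+$. $(m,r)$-restricted strongly convex: $f(Y)\ge f(X)+\langle\nabla f(X),Y-X\rangle+\frac m2\|Y-X\|_F^2$ for all $X,Y\in\mathbb{S}^n_+$ of rank at most $r$. *)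

theory Defs
  imports "HOL-Analysis.Analysis"
begin

text \<open>Matrices are real^'c^'r (rows indexed by 'r, columns by 'c). On this type the
  built-in inner product is the Frobenius inner product tr(A^T B) and norm is the
  Frobenius norm.\<close>

definition psd :: "real^'n^'n \<Rightarrow> bool" where
  "psd X \<longleftrightarrow> transpose X = X \<and> (\<forall>v. 0 \<le> v \<bullet> (X *v v))"

text \<open>k-th largest singular value (k \<ge> 1), Courant-Fischer max-min form.\<close>
definition sigma :: "nat \<Rightarrow> real^'c^'r \<Rightarrow> real" where
  "sigma k A = Sup {Inf ((\<lambda>v. norm (A *v v)) ` {v \<in> V. norm v = 1}) | V.
                      subspace V \<and> dim V = k}"

definition Dist :: "real^'r^'n \<Rightarrow> real^'r^'n \<Rightarrow> real" where
  "Dist U V = Inf {norm (U - V ** R) | R. orthogonal_matrix R}"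

end

theory Submission
  imports Defs
begin

text \<open>Since X* minimises f over the PSD cone, the gradient G* at X* is PSD, so
  <G*, D D^T> >= 0 for D = U - U*_r R. By smoothness,
  <grad f(X), D D^T> >= -M ||X - X*|| ||D||^2, and writing
  U U^T - U*_r U*_r^T = D V^T + V D^T + D D^T with V = U*_r R gives
  ||X - X*|| <= 2 ||D|| sigma_1(U*_r) + ||D||^2 + ||X* - X*_r||.
  Restricted strong convexity and smoothness force m <= M; then, since
  sigma_1(U*_r)^2 <= sigma_1(X*_r) <= sigma_1(X*) + ||X* - X*_r||, the closeness
  assumptions give M (2 ||D|| sigma_1(U*_r) + ||D||^2) <= m sigma_r(X*) / 20.
  The term with the step size eta is nonpositive, so the bound even holds without it.\<close>

lemma power2_norm_vec: "(norm (x::'a::real_normed_vector^'n))\<^sup>2 = (\<Sum>i\<in>UNIV. (norm (x$i))\<^sup>2)"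
  by (simp add: norm_vec_def L2_set_def sum_nonneg)

lemma norm_matrix_vector_le: "norm ((A::real^'c^'r) *v x) \<le> norm A * norm x"
proof -
  have row: "(A$i \<bullet> x)\<^sup>2 \<le> (norm (A$i) * norm x)\<^sup>2" for i
  proof -
    have "\<bar>A$i \<bullet> x\<bar>\<^sup>2 \<le> (norm (A$i) * norm x)\<^sup>2"
      by (rule power_mono[OF Cauchy_Schwarz_ineq2]) simp
    then show ?thesis
      by simp
  qed
  have "(norm (A *v x))\<^sup>2 = (\<Sum>i\<in>UNIV. (A$i \<bullet> x)\<^sup>2)"
    by (simp add: power2_norm_vec matrix_vector_mult_def inner_vec_def mult.commute)
  also have "\<dots> \<le> (\<Sum>i\<in>UNIV. (norm (A$i) * norm x)\<^sup>2)"
    by (intro sum_mono row)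
  also have "\<dots> = (norm A * norm x)\<^sup>2"
    by (simp add: power2_norm_vec[of A] power_mult_distrib sum_distrib_right)
  finally show ?thesis
    by (rule power2_le_imp_le) simp
qed

lemma norm_matrix_vector_unit_le: "norm v = 1 \<Longrightarrow> norm ((A::real^'c^'r) *v v) \<le> norm A"
  using norm_matrix_vector_le[of A v] by simp

lemma norm_transpose: "norm (transpose (A::real^'c^'r)) = norm A"
proof -
  have "(norm (transpose A))\<^sup>2 = (norm A)\<^sup>2"
    unfolding power2_norm_vec by (simp add: transpose_def) (rule sum.swap)
  then show ?thesis
    by (simp add: power2_eq_iff_nonneg)
qed

lemma norm_orthogonal_matrix_vector:
  assumes "orthogonal_matrix (R::real^'r^'r)"
  shows "norm (R *v v) = norm v"
proof -
  have "(R *v v) \<bullet> (R *v v) = (transpose R *v (R *v v)) \<bullet> v"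
    by (simp add: dot_lmul_matrix)
  also have "\<dots> = v \<bullet> v"
    using assms by (simp only: matrix_vector_mul_assoc orthogonal_matrix_def matrix_vector_mul_lid)
  finally show ?thesis
    by (simp add: norm_eq_sqrt_inner)
qed

lemma exists_unit_vector_in_subspace:
  assumes "subspace V" "dim V \<noteq> 0"
  obtains v :: "'a::euclidean_space" where "v \<in> V" "norm v = 1"
proof -
  obtain x where x: "x \<in> V" "x \<noteq> 0"
    using assms dim_eq_0[of V] by auto
  show thesis
    by (rule that[of "x /\<^sub>R norm x"]) (use assms(1) x in \<open>auto intro: subspace_scale\<close>)
qed

definition subspace_gain :: "real^'c^'r \<Rightarrow> (real^'c) set \<Rightarrow> real" where
  "subspace_gain A V = Inf ((\<lambda>v. norm (A *v v)) ` {v \<in> V. norm v = 1})"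

lemma sigma_eq_Sup_subspace_gain:
  "sigma k A = Sup {subspace_gain A V | V. subspace V \<and> dim V = k}"
  unfolding sigma_def subspace_gain_def ..

lemma subspace_gain_bounds:
  fixes A :: "real^'c^'r"
  assumes "subspace V" "dim V \<noteq> 0" and B: "\<And>v. norm v = 1 \<Longrightarrow> norm (A *v v) \<le> B"
  shows "0 \<le> subspace_gain A V" and "subspace_gain A V \<le> B"
proof -
  obtain v where v: "v \<in> V" "norm v = 1"
    using exists_unit_vector_in_subspace[OF assms(1,2)] .
  then show "0 \<le> subspace_gain A V"
    unfolding subspace_gain_def by (intro cInf_greatest) auto
  have "subspace_gain A V \<le> norm (A *v v)"
    unfolding subspace_gain_def
    by (rule cInf_lower) (use v in \<open>auto intro: bdd_belowI[where m=0]\<close>)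
  then show "subspace_gain A V \<le> B"
    using B v by fastforce
qed

lemma bdd_above_subspace_gains:
  assumes "1 \<le> k"
  shows "bdd_above {subspace_gain (A::real^'c^'r) V | V. subspace V \<and> dim V = k}"
proof (rule bdd_aboveI[where M="norm A"])
  fix g assume "g \<in> {subspace_gain A V | V. subspace V \<and> dim V = k}"
  then obtain V where "g = subspace_gain A V" "subspace V" "dim V = k"
    by blast
  then show "g \<le> norm A"
    using subspace_gain_bounds(2)[of V A "norm A"] norm_matrix_vector_unit_le assms by fastforce
qed

lemma sigma_bounds:
  fixes A :: "real^'c^'r"
  assumes "1 \<le> k" "k \<le> CARD('c)" and B: "\<And>v. norm v = 1 \<Longrightarrow> norm (A *v v) \<le> B"
  shows "0 \<le> sigma k A" and "sigma k A \<le> B"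
proof -
  note gain = subspace_gain_bounds[where A=A, OF _ _ B]
  obtain V :: "(real^'c) set" where V: "subspace V" "dim V = k"
    using choose_subspace_of_subspace[of k "UNIV :: (real^'c) set"] assms(2) by auto
  have "subspace_gain A V \<le> sigma k A"
    unfolding sigma_eq_Sup_subspace_gain
    by (rule cSup_upper[OF _ bdd_above_subspace_gains[OF assms(1)]]) (use V in blast)
  then show "0 \<le> sigma k A"
    using gain(1)[OF V(1)] V(2) assms(1) by fastforce
  show "sigma k A \<le> B"
    unfolding sigma_eq_Sup_subspace_gain
    by (rule cSup_least) (use V gain(2) assms(1) in fastforce)+
qed

lemma one_le_card: "1 \<le> CARD('a::finite)"
  by (simp add: Suc_leI)

lemma sigma_nonneg: "1 \<le> k \<Longrightarrow> k \<le> CARD('c) \<Longrightarrow> 0 \<le> sigma k (A::real^'c^'r)"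
  using sigma_bounds(1) norm_matrix_vector_unit_le by blast

lemma sigma1_le_norm: "sigma 1 (A::real^'c^'r) \<le> norm A"
  using sigma_bounds(2)[OF order_refl one_le_card] norm_matrix_vector_unit_le by blast

lemma norm_matrix_vector_le_sigma1_unit:
  fixes A :: "real^'c^'r"
  assumes "norm v = 1"
  shows "norm (A *v v) \<le> sigma 1 A"
proof -
  have line: "subspace (span {v})" "dim (span {v}) = 1"
    using assms by (auto simp: dim_span dim_singleton)
  have "norm (A *v v) \<le> subspace_gain A (span {v})"
    unfolding subspace_gain_def
  proof (rule cInf_greatest)
    show "(\<lambda>v. norm (A *v v)) ` {w \<in> span {v}. norm w = 1} \<noteq> {}"
      using assms span_base[of v "{v}"] by auto
  next
    fix y assume "y \<in> (\<lambda>v. norm (A *v v)) ` {w \<in> span {v}. norm w = 1}"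
    then obtain c where "y = norm (A *v (c *\<^sub>R v))" "\<bar>c\<bar> = 1"
      using assms by (auto simp: span_singleton)
    then show "norm (A *v v) \<le> y"
      by (simp add: matrix_vector_mult_scaleR)
  qed
  also have "\<dots> \<le> sigma 1 A"
    unfolding sigma_eq_Sup_subspace_gain
    by (rule cSup_upper[OF _ bdd_above_subspace_gains[OF order_refl]]) (use line in blast)
  finally show ?thesis .
qed

lemma norm_matrix_vector_le_sigma1: "norm ((A::real^'c^'r) *v x) \<le> sigma 1 A * norm x"
proof (cases "x = 0")
  case False
  have "norm (A *v (x /\<^sub>R norm x)) \<le> sigma 1 A"
    by (rule norm_matrix_vector_le_sigma1_unit) (use False in simp)
  then have "norm (A *v x) / norm x \<le> sigma 1 A"
    by (simp add: matrix_vector_mult_scaleR divide_inverse mult.commute)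
  then show ?thesis
    using False by (simp add: divide_le_eq mult.commute)
qed simp

lemma sigma1_nonneg: "0 \<le> sigma 1 (A::real^'c^'r)"
  by (rule sigma_nonneg[OF order_refl one_le_card])

lemma sigma_le_sigma1: "1 \<le> k \<Longrightarrow> k \<le> CARD('c) \<Longrightarrow> sigma k (A::real^'c^'r) \<le> sigma 1 A"
  using sigma_bounds(2) norm_matrix_vector_le_sigma1_unit by blast

lemma sigma1_le_add_norm_diff: "sigma 1 (A::real^'c^'r) \<le> sigma 1 B + norm (A - B)"
proof (rule sigma_bounds(2)[OF order_refl one_le_card])
  fix v :: "real^'c" assume v: "norm v = 1"
  have "norm (A *v v) \<le> norm (B *v v) + norm ((A - B) *v v)"
    using norm_triangle_ineq[of "B *v v" "(A - B) *v v"] by (simp add: matrix_vector_mult_diff_rdistrib)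
  then show "norm (A *v v) \<le> sigma 1 B + norm (A - B)"
    using norm_matrix_vector_le_sigma1_unit[OF v, of B] norm_matrix_vector_unit_le[OF v, of "A - B"]
    by linarith
qed

lemma sigma1_mult_orthogonal_le:
  assumes "orthogonal_matrix R"
  shows "sigma 1 ((A::real^'r^'n) ** R) \<le> sigma 1 A"
proof (rule sigma_bounds(2)[OF order_refl one_le_card])
  fix v :: "real^'r" assume "norm v = 1"
  then show "norm ((A ** R) *v v) \<le> sigma 1 A"
    using norm_matrix_vector_le_sigma1_unit[of "R *v v" A] norm_orthogonal_matrix_vector[OF assms]
    by (simp add: matrix_vector_mul_assoc[symmetric])
qed

lemma norm_mult_transpose_le: "norm ((A::real^'c^'r) ** transpose (B::real^'c^'n)) \<le> norm A * sigma 1 B"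
proof -
  have row: "(A ** transpose B)$i = B *v A$i" for i
    by (simp add: vec_eq_iff matrix_matrix_mult_def matrix_vector_mult_def transpose_def mult.commute)
  have "(norm (A ** transpose B))\<^sup>2 = (\<Sum>i\<in>UNIV. (norm (B *v A$i))\<^sup>2)"
    unfolding power2_norm_vec row ..
  also have "\<dots> \<le> (\<Sum>i\<in>UNIV. (sigma 1 B * norm (A$i))\<^sup>2)"
    by (intro sum_mono power_mono norm_matrix_vector_le_sigma1) simp
  also have "\<dots> = (norm A * sigma 1 B)\<^sup>2"
    by (simp add: power2_norm_vec[of A] power_mult_distrib sum_distrib_left mult.commute)
  finally show ?thesis
    by (rule power2_le_imp_le) (intro mult_nonneg_nonneg norm_ge_zero sigma1_nonneg)
qed

lemma norm_outer_le: "norm ((D::real^'c^'r) ** transpose D) \<le> (norm D)\<^sup>2"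
  using norm_mult_transpose_le[of D D] mult_left_mono[OF sigma1_le_norm[of D] norm_ge_zero[of D]]
  by (simp add: power2_eq_square)

lemma inner_matrix_vector_transpose: "v \<bullet> ((A::real^'c^'r) *v w) = (transpose A *v v) \<bullet> w"
  by (simp add: dot_lmul_matrix)

lemma sigma1_power2_le_outer: "(sigma 1 (U::real^'c^'r))\<^sup>2 \<le> sigma 1 (U ** transpose U)"
proof -
  let ?s = "sigma 1 (U ** transpose U)"
  have "sigma 1 U \<le> sqrt ?s"
  proof (rule sigma_bounds(2)[OF order_refl one_le_card])
    fix w :: "real^'c" assume w: "norm w = 1"
    define y where "y = U *v w"
    have "(norm y)\<^sup>2 = (transpose U *v y) \<bullet> w"
      by (simp add: y_def power2_norm_eq_inner inner_matrix_vector_transpose)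
    also have "\<dots> \<le> norm (transpose U *v y)"
      using norm_cauchy_schwarz[of "transpose U *v y" w] w by simp
    finally have "((norm y)\<^sup>2)\<^sup>2 \<le> (norm (transpose U *v y))\<^sup>2"
      by (rule power_mono) simp
    also have "(norm (transpose U *v y))\<^sup>2 = y \<bullet> ((U ** transpose U) *v y)"
      by (simp only: power2_norm_eq_inner matrix_vector_mul_assoc[symmetric]
          inner_matrix_vector_transpose[of y U])
    also have "\<dots> \<le> norm y * (?s * norm y)"
      using norm_cauchy_schwarz[of y] mult_left_mono[OF norm_matrix_vector_le_sigma1 norm_ge_zero[of y]]
      by (rule order_trans)
    finally have "(norm y)\<^sup>2 * (norm y)\<^sup>2 \<le> ?s * (norm y)\<^sup>2"
      by (simp add: power2_eq_square mult_ac)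
    then have "(norm y)\<^sup>2 \<le> ?s"
      using sigma1_nonneg[of "U ** transpose U"] mult_right_le_imp_le[of "(norm y)\<^sup>2" "(norm y)\<^sup>2" ?s]
      by (cases "y = 0") auto
    then show "norm (U *v w) \<le> sqrt ?s"
      by (simp add: y_def real_le_rsqrt)
  qed
  then show ?thesis
    using power_mono[OF _ sigma1_nonneg, of U "sqrt ?s" 2] sigma1_nonneg[of "U ** transpose U"] by simp
qed

lemma psd_outer: "psd ((U::real^'r^'n) ** transpose U)"
  unfolding psd_def
proof (intro conjI allI)
  show "transpose (U ** transpose U) = U ** transpose U"
    by (simp add: matrix_transpose_mul)
  fix v
  have "v \<bullet> ((U ** transpose U) *v v) = (transpose U *v v) \<bullet> (transpose U *v v)"
    by (simp add: inner_matrix_vector_transpose matrix_vector_mul_assoc[symmetric])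
  then show "0 \<le> v \<bullet> ((U ** transpose U) *v v)"
    by simp
qed

lemma inner_outer_eq_sum_columns:
  fixes G :: "real^'n^'n" and D :: "real^'r^'n"
  shows "G \<bullet> (D ** transpose D) = (\<Sum>k\<in>UNIV. column k D \<bullet> (G *v column k D))"
proof -
  have "G \<bullet> (D ** transpose D) = (\<Sum>i\<in>UNIV. \<Sum>j\<in>UNIV. \<Sum>k\<in>UNIV. G$i$j * D$i$k * D$j$k)"
    by (simp add: inner_vec_def matrix_matrix_mult_def transpose_def sum_distrib_left mult_ac)
  also have "\<dots> = (\<Sum>i\<in>UNIV. \<Sum>k\<in>UNIV. \<Sum>j\<in>UNIV. G$i$j * D$i$k * D$j$k)"
    by (intro sum.cong refl sum.swap)
  also have "\<dots> = (\<Sum>k\<in>UNIV. \<Sum>i\<in>UNIV. \<Sum>j\<in>UNIV. G$i$j * D$i$k * D$j$k)"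
    by (rule sum.swap)
  also have "\<dots> = (\<Sum>k\<in>UNIV. column k D \<bullet> (G *v column k D))"
    by (simp add: column_def inner_vec_def matrix_vector_mult_def sum_distrib_left mult_ac)
  finally show ?thesis .
qed

lemma inner_outer_nonneg:
  fixes G :: "real^'n^'n" and D :: "real^'r^'n"
  assumes "\<And>c. 0 \<le> c \<bullet> (G *v c)"
  shows "0 \<le> G \<bullet> (D ** transpose D)"
  unfolding inner_outer_eq_sum_columns by (intro sum_nonneg assms)

lemma inner_outer_ge_of_psd:
  fixes G G0 :: "real^'n^'n" and D :: "real^'r^'n"
  assumes "\<And>c. 0 \<le> c \<bullet> (G0 *v c)"
  shows "- (norm (G - G0) * (norm D)\<^sup>2) \<le> G \<bullet> (D ** transpose D)"
proof -
  have "- (norm (G - G0) * (norm D)\<^sup>2) \<le> - (norm (G - G0) * norm (D ** transpose D))"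
    using mult_left_mono[OF norm_outer_le norm_ge_zero] by simp
  also have "\<dots> \<le> (G - G0) \<bullet> (D ** transpose D)"
    using norm_cauchy_schwarz[of "G0 - G" "D ** transpose D"]
    by (simp add: inner_diff_left norm_minus_commute)
  also have "\<dots> \<le> G \<bullet> (D ** transpose D)"
    using inner_outer_nonneg[OF assms, of D] by (simp add: inner_diff_left)
  finally show ?thesis .
qed

lemma outer_mult_orthogonal:
  fixes A :: "real^'r^'n" and R :: "real^'r^'r"
  assumes "orthogonal_matrix R"
  shows "(A ** R) ** transpose (A ** R) = A ** transpose A"
proof -
  have "(A ** R) ** transpose (A ** R) = A ** (R ** transpose R) ** transpose A"
    by (simp only: matrix_transpose_mul matrix_mul_assoc)
  then show ?thesis
    using assms by (simp add: orthogonal_matrix_def)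
qed

lemma matrix_add_rdistrib: "((A::'a::semiring_1^'m^'n) + B) ** C = A ** C + B ** C"
  by (simp add: vec_eq_iff matrix_matrix_mult_def sum.distrib distrib_right)

lemma transpose_add: "transpose ((A::'a::semiring_1^'m^'n) + B) = transpose A + transpose B"
  by (simp add: vec_eq_iff transpose_def)

lemma norm_outer_diff_le:
  fixes U V :: "real^'r^'n"
  shows "norm (U ** transpose U - V ** transpose V) \<le> 2 * norm (U - V) * sigma 1 V + (norm (U - V))\<^sup>2"
proof -
  define D where "D = U - V"
  have "U = V + D"
    by (simp add: D_def)
  then have "U ** transpose U = (V + D) ** (transpose V + transpose D)"
    by (simp only: transpose_add)
  also have "\<dots> = V ** transpose V + D ** transpose V + transpose (D ** transpose V) + D ** transpose D"
    by (simp add: matrix_add_ldistrib matrix_add_rdistrib matrix_transpose_mul)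
  finally have "U ** transpose U - V ** transpose V
      = D ** transpose V + transpose (D ** transpose V) + D ** transpose D"
    by simp
  then have "norm (U ** transpose U - V ** transpose V)
      \<le> 2 * norm (D ** transpose V) + norm (D ** transpose D)"
    using norm_triangle_ineq[of "D ** transpose V + transpose (D ** transpose V)" "D ** transpose D"]
      norm_triangle_ineq[of "D ** transpose V" "transpose (D ** transpose V)"]
    by (simp add: norm_transpose)
  then show ?thesis
    using norm_mult_transpose_le[of D V] norm_outer_le[of D] by (simp add: D_def)
qed

lemma norm_outer_diff_orthogonal_le:
  fixes U V :: "real^'r^'n" and R :: "real^'r^'r"
  assumes "orthogonal_matrix R"
  shows "norm (U ** transpose U - V ** transpose V)
    \<le> 2 * norm (U - V ** R) * sigma 1 V + (norm (U - V ** R))\<^sup>2"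
  using norm_outer_diff_le[of U "V ** R"] outer_mult_orthogonal[OF assms, of V]
    mult_left_mono[OF sigma1_mult_orthogonal_le[OF assms, of V], of "2 * norm (U - V ** R)"]
  by simp

lemma sigma1_power2_le_add_norm_diff:
  "(sigma 1 (U::real^'r^'n))\<^sup>2 \<le> sigma 1 X + norm (X - U ** transpose U)"
  using sigma1_power2_le_outer[of U] sigma1_le_add_norm_diff[of "U ** transpose U" X]
  by (simp add: norm_minus_commute)

lemma inner_rank_one: "(G::real^'n^'n) \<bullet> (\<chi> i j. c$i * c$j) = c \<bullet> (G *v c)"
  by (simp add: inner_vec_def matrix_vector_mult_def sum_distrib_left mult_ac)

lemma psd_add_rank_one:
  assumes "psd X" "0 \<le> t"
  shows "psd (X + t *\<^sub>R (\<chi> i j. c$i * c$j))"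
  unfolding psd_def
proof (intro conjI allI)
  have "X$j$i = X$i$j" for i j
    using assms(1) unfolding psd_def transpose_def vec_eq_iff by auto
  then show "transpose (X + t *\<^sub>R (\<chi> i j. c$i * c$j)) = X + t *\<^sub>R (\<chi> i j. c$i * c$j)"
    by (simp add: transpose_def vec_eq_iff mult.commute)
  fix v
  have "v \<bullet> ((X + t *\<^sub>R (\<chi> i j. c$i * c$j)) *v v) = v \<bullet> (X *v v) + t * (c \<bullet> v)\<^sup>2"
    by (simp add: matrix_vector_mult_def inner_vec_def sum_distrib_left sum_distrib_right
        algebra_simps power2_eq_square sum.distrib)
  then show "0 \<le> v \<bullet> ((X + t *\<^sub>R (\<chi> i j. c$i * c$j)) *v v)"
    using assms unfolding psd_def by simp
qed

text \<open>Moving from the minimiser along the PSD direction c c^T cannot decrease f.\<close>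

lemma psd_minimizer_gradient_psd:
  fixes f :: "real^'n^'n \<Rightarrow> real"
  assumes deriv: "(f has_derivative (\<lambda>H. G \<bullet> H)) (at X)"
    and "psd X" and min: "\<And>Y. psd Y \<Longrightarrow> f X \<le> f Y"
  shows "0 \<le> c \<bullet> (G *v c)"
proof (rule ccontr)
  assume neg: "\<not> 0 \<le> c \<bullet> (G *v c)"
  define P :: "real^'n^'n" where "P = (\<chi> i j. c$i * c$j)"
  define g where "g = (\<lambda>t::real. f (X + t *\<^sub>R P))"
  have line: "((\<lambda>t::real. X + t *\<^sub>R P) has_derivative (\<lambda>t. t *\<^sub>R P)) (at 0)"
    by (auto intro!: derivative_eq_intros)
  have "(f has_derivative (\<lambda>H. G \<bullet> H)) (at ((\<lambda>t::real. X + t *\<^sub>R P) 0))"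
    using deriv by simp
  from diff_chain_at[OF line this] have "(g has_derivative (\<lambda>t. G \<bullet> (t *\<^sub>R P))) (at 0)"
    by (simp add: g_def o_def)
  then have "(g has_real_derivative (G \<bullet> P)) (at 0)"
    by (rule has_derivative_imp_has_field_derivative) (simp add: mult.commute)
  moreover have "G \<bullet> P < 0"
    using neg unfolding P_def inner_rank_one by simp
  ultimately obtain d where "d > 0" "\<And>h. 0 < h \<Longrightarrow> h < d \<Longrightarrow> g h < g 0"
    using DERIV_neg_dec_right by (metis add_0)
  then have "g (d/2) < g 0"
    by simp
  moreover have "g 0 \<le> g (d/2)"
    unfolding g_def P_def using min psd_add_rank_one[OF \<open>psd X\<close>] \<open>d > 0\<close> by simp
  ultimately show False
    by simp
qed

text \<open>Both inequalities are tested on the all-ones matrix E E^T, E a single column: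
  it is PSD, nonzero and of rank one.\<close>

lemma restricted_strongly_convex_smooth_le:
  fixes f :: "real^'n^'n \<Rightarrow> real" and gf :: "real^'n^'n \<Rightarrow> real^'n^'n"
  assumes smooth: "\<And>X Y. psd X \<Longrightarrow> psd Y \<Longrightarrow> norm (gf X - gf Y) \<le> M * norm (X - Y)"
    and rsc: "\<And>X Y. psd X \<Longrightarrow> psd Y \<Longrightarrow> rank X \<le> k \<Longrightarrow> rank Y \<le> k \<Longrightarrow>
                f Y \<ge> f X + gf X \<bullet> (Y - X) + m / 2 * (norm (Y - X))\<^sup>2"
    and "1 \<le> k"
  shows "m \<le> M"
proof -
  define E :: "real^1^'n" where "E = (\<chi> i j. 1)"
  define P where "P = E ** transpose E"
  have psd: "psd P" "psd (0::real^'n^'n)"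
    using psd_outer[of E] psd_outer[of "0 :: real^1^'n"] by (simp_all add: P_def)
  have rank: "rank P \<le> k" "rank (0::real^'n^'n) \<le> k"
    using rank_mul_le_left[of E "transpose E"] rank_bound[of E] \<open>1 \<le> k\<close> by (simp_all add: P_def)
  have "P \<noteq> 0"
    by (simp add: P_def E_def vec_eq_iff matrix_matrix_mult_def transpose_def)
  have "m * (norm P)\<^sup>2 \<le> (gf P - gf 0) \<bullet> P"
    using rsc[OF psd rank] rsc[OF psd(2,1) rank(2,1)] by (simp add: inner_diff_left inner_diff_right)
  also have "\<dots> \<le> norm (gf P - gf 0) * norm P"
    by (rule norm_cauchy_schwarz)
  also have "\<dots> \<le> M * (norm P)\<^sup>2"
    using mult_right_mono[OF smooth[OF psd] norm_ge_zero[of P]] by (simp add: power2_eq_square)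
  finally show ?thesis
    using \<open>P \<noteq> 0\<close> by simp
qed

text \<open>In the application a = ||Delta||, u = sigma_1(U*_r), v = sigma_r(U*_r),
  s = sigma_1(X*), q = sigma_r(X*) and e = ||X* - X*_r||.\<close>

lemma local_perturbation_le:
  fixes m M s q u v a e :: real
  assumes "0 < m" "m \<le> M" "0 \<le> q" "q \<le> s" "0 \<le> u" "v \<le> u" "0 \<le> a"
    and a: "a \<le> 1 / (100 * (M / m)) * (q / s) * v"
    and e: "e \<le> 1 / (200 * (M / m) powr 1.5) * (q / s) * q"
    and u: "u\<^sup>2 \<le> s + e"
  shows "M * (2 * a * u + a\<^sup>2) \<le> m * q / 20"
proof (cases "s = 0")
  case True
  then show ?thesis
    using assms by simp
next
  case False
  then have "0 < s"
    using assms by linarith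
  define \<kappa> where "\<kappa> = M / m"
  define \<rho> where "\<rho> = 1 / (100 * \<kappa>) * (q / s)"
  have "1 \<le> \<kappa>"
    using assms by (simp add: \<kappa>_def)
  have "0 \<le> \<rho>" "\<rho> \<le> 1 / 100"
    using \<open>1 \<le> \<kappa>\<close> \<open>0 < s\<close> assms mult_mono[OF \<open>1 \<le> \<kappa>\<close> \<open>q \<le> s\<close>]
    by (auto simp: \<rho>_def field_simps)
  have "1 / (200 * \<kappa> powr 1.5) \<le> 1 / 200"
    using \<open>1 \<le> \<kappa>\<close> ge_one_powr_ge_zero[of \<kappa> "1.5"] by (simp add: divide_simps)
  then have "e \<le> 1 / 200 * (q / s * q)"
    using e mult_right_mono[of "1 / (200 * \<kappa> powr 1.5)" "1 / 200" "q / s * q"] assms \<open>0 < s\<close>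
    unfolding \<kappa>_def by (simp only: mult.assoc) simp
  also have "\<dots> \<le> s / 200"
    using assms \<open>0 < s\<close> mult_mono[OF \<open>q \<le> s\<close> \<open>q \<le> s\<close>] by (simp add: field_simps power2_eq_square)
  finally have u_sq: "u\<^sup>2 \<le> 201 / 200 * s"
    using u by simp
  have "a \<le> \<rho> * u"
    using a mult_left_mono[OF \<open>v \<le> u\<close> \<open>0 \<le> \<rho>\<close>] by (simp add: \<rho>_def \<kappa>_def)
  then have "2 * a * u + a\<^sup>2 \<le> 2 * \<rho> * u\<^sup>2 + (\<rho> * u)\<^sup>2"
    using assms mult_right_mono[of a "\<rho> * u" u] power_mono[of a "\<rho> * u" 2]
    by (simp add: power2_eq_square)
  also have "\<dots> \<le> 201 / 100 * \<rho> * u\<^sup>2"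
    using \<open>0 \<le> \<rho>\<close> \<open>\<rho> \<le> 1 / 100\<close> mult_right_mono[OF \<open>\<rho> \<le> 1 / 100\<close>, of "\<rho> * u\<^sup>2"]
    by (simp add: power2_eq_square algebra_simps)
  also have "\<dots> \<le> 201 / 100 * \<rho> * (201 / 200 * s)"
    by (intro mult_left_mono u_sq) (use \<open>0 \<le> \<rho>\<close> in simp)
  finally have "M * (2 * a * u + a\<^sup>2) \<le> 201 / 100 * 201 / 200 * (M * \<rho> * s)"
    using assms by (simp add: mult_left_mono)
  also have "M * \<rho> * s = m * q / 100"
    using assms \<open>0 < s\<close> by (simp add: \<rho>_def \<kappa>_def field_simps)
  finally show ?thesis
    using mult_nonneg_nonneg[of m q] assms(1,3) by linarith
qed

theorem lemma6p3:
  fixes f :: "real^'n^'n \<Rightarrow> real"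
    and gf :: "real^'n^'n \<Rightarrow> real^'n^'n"
    and M m :: real
    and Xstar :: "real^'n^'n"
    and Ustar U :: "real^'r^'n"
    and R :: "real^'r^'r"
    and Q :: "real^'k^'n"
  assumes grad: "\<And>X. (f has_derivative (\<lambda>H. gf X \<bullet> H)) (at X)"
    and conv: "convex_on UNIV f"
    and symm: "\<And>X. f X = f (transpose X)"
    and m_pos: "0 < m"
    and smooth: "\<And>X Y. psd X \<Longrightarrow> psd Y \<Longrightarrow> norm (gf X - gf Y) \<le> M * norm (X - Y)"
    and rsc: "\<And>X Y. psd X \<Longrightarrow> psd Y \<Longrightarrow> rank X \<le> CARD('r) \<Longrightarrow> rank Y \<le> CARD('r) \<Longrightarrow>
                f Y \<ge> f X + gf X \<bullet> (Y - X) + m / 2 * (norm (Y - X))\<^sup>2"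
    and Xstar_psd: "psd Xstar"
    and Xstar_min: "\<And>Y. psd Y \<Longrightarrow> f Xstar \<le> f Y"
    and r_le: "CARD('r) \<le> rank Xstar"
    and best_rank: "rank (Ustar ** transpose Ustar) \<le> CARD('r)"
    and best_approx: "\<And>Y. rank Y \<le> CARD('r) \<Longrightarrow>
                norm (Xstar - Ustar ** transpose Ustar) \<le> norm (Xstar - Y)"
    and A3: "norm (Xstar - Ustar ** transpose Ustar)
              \<le> 1 / (200 * (M / m) powr 1.5) * (sigma (CARD('r)) Xstar / sigma 1 Xstar)
                 * sigma (CARD('r)) Xstar"
    and U_close: "Dist U Ustar \<le> (1 / (100 * (M / m)) * (sigma (CARD('r)) Xstar / sigma 1 Xstar))
                    * sigma (CARD('r)) Ustar"
    and R_orth: "orthogonal_matrix R"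
    and R_min: "norm (U - Ustar ** R) = Dist U Ustar"
    and Q_orth: "transpose Q ** Q = mat 1"
    and Q_span: "span (columns Q) = span (columns U)"
  shows "let X = U ** transpose U; \<Delta> = U - Ustar ** R;
             \<eta> = 1 / (16 * (M * sigma 1 X + sigma 1 (gf X ** Q ** transpose Q)))
         in gf X \<bullet> (\<Delta> ** transpose \<Delta>)
            \<ge> - (2 * \<eta> / 25) * (norm (gf X ** U))\<^sup>2
              - (m * sigma (CARD('r)) Xstar / 20 + M * norm (Xstar - Ustar ** transpose Ustar))
                * (Dist U Ustar)\<^sup>2"
proof -
  define X where "X = U ** transpose U"
  define \<Delta> where "\<Delta> = U - Ustar ** R"
  define a where "a = Dist U Ustar"
  define e where "e = norm (Xstar - Ustar ** transpose Ustar)"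
  define \<eta> where "\<eta> = 1 / (16 * (M * sigma 1 X + sigma 1 (gf X ** Q ** transpose Q)))"
  have a: "norm \<Delta> = a" and "0 \<le> a"
    using R_min norm_ge_zero[of \<Delta>] by (simp_all add: \<Delta>_def a_def)
  have "m \<le> M"
    by (rule restricted_strongly_convex_smooth_le[OF smooth rsc one_le_card])
  have r_le_n: "CARD('r) \<le> CARD('n)"
    using r_le rank_bound[of Xstar] by simp
  have "norm (gf X - gf Xstar) \<le> M * norm (X - Xstar)"
    unfolding X_def by (rule smooth[OF psd_outer Xstar_psd])
  then have grad_bound: "- (M * norm (X - Xstar) * a\<^sup>2) \<le> gf X \<bullet> (\<Delta> ** transpose \<Delta>)"
    using inner_outer_ge_of_psd[OF psd_minimizer_gradient_psd[OF grad Xstar_psd Xstar_min], of "gf X" \<Delta>]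
      mult_right_mono[of _ _ "a\<^sup>2"] a by fastforce
  have near: "norm (X - Xstar) \<le> 2 * a * sigma 1 Ustar + a\<^sup>2 + e"
  proof (rule norm_diff_triangle_le)
    show "norm (X - Ustar ** transpose Ustar) \<le> 2 * a * sigma 1 Ustar + a\<^sup>2"
      using norm_outer_diff_orthogonal_le[OF R_orth, of U Ustar] by (simp add: X_def a[unfolded \<Delta>_def])
  qed (simp add: e_def norm_minus_commute)
  have small: "M * (2 * a * sigma 1 Ustar + a\<^sup>2) \<le> m * sigma (CARD('r)) Xstar / 20"
    using sigma1_power2_le_add_norm_diff[of Ustar Xstar, folded e_def]
    by (rule local_perturbation_le[OF m_pos \<open>m \<le> M\<close> sigma_nonneg[OF one_le_card r_le_n]
          sigma_le_sigma1[OF one_le_card r_le_n] sigma1_nonneg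
          sigma_le_sigma1[OF one_le_card order_refl] \<open>0 \<le> a\<close> U_close[folded a_def] A3[folded e_def]])
  have "M * norm (X - Xstar) \<le> m * sigma (CARD('r)) Xstar / 20 + M * e"
    using mult_left_mono[OF near, of M] small \<open>m \<le> M\<close> m_pos by (simp add: distrib_left)
  then have "- ((m * sigma (CARD('r)) Xstar / 20 + M * e) * a\<^sup>2) \<le> gf X \<bullet> (\<Delta> ** transpose \<Delta>)"
    using grad_bound mult_right_mono[of _ _ "a\<^sup>2"] by fastforce
  moreover have "0 \<le> 2 * \<eta> / 25 * (norm (gf X ** U))\<^sup>2"
    using sigma1_nonneg[of X] sigma1_nonneg[of "gf X ** Q ** transpose Q"] \<open>m \<le> M\<close> m_pos
    by (simp add: \<eta>_def)
  ultimately show ?thesis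
    unfolding Let_def X_def[symmetric] \<Delta>_def[symmetric] \<eta>_def[symmetric] a_def[symmetric] e_def[symmetric]
    by linarith
qed

end
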